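(* Let $\boldsymbol x^*$ be a pure Nash equilibrium of $\mathcal L(n,S)$ that satisfies the vertex property. Then for every point $w\in S$, \[ \operatorname{card}\{i\in N: x_i^*=w\}\le \operatorname{degree}(w). \]
   Context: Network: $(V,E)$ is a finite connected graph with no vertex of degree $2$; each edge $e$ has a length $\lambda(e)>0$. $S$ is the metric measure space obtained by identifying each edge with a segment of length $\lambda(e)$, with length measure $\lambda$ and shortest-path distance $d$. For $v\in V$, $\operatorname{degree}(v)$ is its graph degree. For a point $x\in S\setminus V$ (interior of an edge), $\operatorname{degree}(x)=2$. Location game $\mathcal L(n,S)$ with player set $N=\{1,\dots,n\}$: each player chooses a point of $S$. Consumers are distributed according to $\lambda$, and each shops at a closest occupied location. Consumers equidistant from several closest occupied locations are split equally among those locations, and the share of a location is split equally among the players located there. A player's payoff is the mass of consumers she attracts. Nash equilibria are pure. A profile satisfies the vertex property if every vertex of degree $\ge3$ is occupied by at least one player. *)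

theory Defs
  imports "HOL-Analysis.Analysis"
begin

text \<open>A network is given by a finite vertex set V, a set E of edges, each edge
stored once with an arbitrary orientation as a pair (u,v) with u ~= v, and a
length function lam on edges.  Points of the metric space S are either vertices
or interior points of edges: Mid (u,v) t is the point on edge (u,v) at
distance t from u, with 0 < t < lam (u,v).\<close>

datatype 'v pt = Vtx 'v | Mid "'v \<times> 'v" real

definition adj :: "('v \<times> 'v) set \<Rightarrow> 'v \<Rightarrow> 'v \<Rightarrow> bool" where
  "adj E u v \<longleftrightarrow> (u, v) \<in> E \<or> (v, u) \<in> E"

definition elen :: "('v \<times> 'v) set \<Rightarrow> ('v \<times> 'v \<Rightarrow> real) \<Rightarrow> 'v \<Rightarrow> 'v \<Rightarrow> real" where
  "elen E lam u v = (if (u, v) \<in> E then lam (u, v) else lam (v, u))"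

definition is_walk :: "('v \<times> 'v) set \<Rightarrow> 'v list \<Rightarrow> bool" where
  "is_walk E ws \<longleftrightarrow> ws \<noteq> [] \<and> (\<forall>i. Suc i < length ws \<longrightarrow> adj E (ws ! i) (ws ! Suc i))"

definition walk_len :: "('v \<times> 'v) set \<Rightarrow> ('v \<times> 'v \<Rightarrow> real) \<Rightarrow> 'v list \<Rightarrow> real" where
  "walk_len E lam ws = (\<Sum>i<length ws - 1. elen E lam (ws ! i) (ws ! Suc i))"

definition dV :: "('v \<times> 'v) set \<Rightarrow> ('v \<times> 'v \<Rightarrow> real) \<Rightarrow> 'v \<Rightarrow> 'v \<Rightarrow> real" where
  "dV E lam u v = Inf {walk_len E lam ws | ws. is_walk E ws \<and> hd ws = u \<and> last ws = v}"

definition network :: "'v set \<Rightarrow> ('v \<times> 'v) set \<Rightarrow> ('v \<times> 'v \<Rightarrow> real) \<Rightarrow> bool" where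
  "network V E lam \<longleftrightarrow>
     finite V \<and> E \<subseteq> V \<times> V \<and> E \<noteq> {} \<and>
     (\<forall>u v. (u, v) \<in> E \<longrightarrow> u \<noteq> v \<and> (v, u) \<notin> E) \<and>
     (\<forall>e\<in>E. lam e > 0) \<and>
     (\<forall>u\<in>V. \<forall>v\<in>V. \<exists>ws. is_walk E ws \<and> hd ws = u \<and> last ws = v)"

definition vdeg :: "('v \<times> 'v) set \<Rightarrow> 'v \<Rightarrow> nat" where
  "vdeg E v = card {e \<in> E. fst e = v \<or> snd e = v}"

fun pdeg :: "('v \<times> 'v) set \<Rightarrow> 'v pt \<Rightarrow> nat" where
  "pdeg E (Vtx v) = vdeg E v"
| "pdeg E (Mid e t) = 2"

definition points :: "'v set \<Rightarrow> ('v \<times> 'v) set \<Rightarrow> ('v \<times> 'v \<Rightarrow> real) \<Rightarrow> 'v pt set" where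
  "points V E lam = Vtx ` V \<union> {Mid e t | e t. e \<in> E \<and> 0 < t \<and> t < lam e}"

fun ends :: "('v \<times> 'v \<Rightarrow> real) \<Rightarrow> 'v pt \<Rightarrow> ('v \<times> real) set" where
  "ends lam (Vtx v) = {(v, 0)}"
| "ends lam (Mid (a, b) t) = {(a, t), (b, lam (a, b) - t)}"

definition dvia :: "('v \<times> 'v) set \<Rightarrow> ('v \<times> 'v \<Rightarrow> real) \<Rightarrow> 'v pt \<Rightarrow> 'v pt \<Rightarrow> real" where
  "dvia E lam p q = Min {s + dV E lam a b + r | a s b r. (a, s) \<in> ends lam p \<and> (b, r) \<in> ends lam q}"

text \<open>Shortest-path distance on S: a shortest path either stays inside a common
edge, or leaves the edge of each point through one of its endpoints.\<close>
fun pdist :: "('v \<times> 'v) set \<Rightarrow> ('v \<times> 'v \<Rightarrow> real) \<Rightarrow> 'v pt \<Rightarrow> 'v pt \<Rightarrow> real" where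
  "pdist E lam (Mid e t) (Mid e' t') =
     (if e = e' then min \<bar>t - t'\<bar> (dvia E lam (Mid e t) (Mid e' t'))
      else dvia E lam (Mid e t) (Mid e' t'))"
| "pdist E lam p q = dvia E lam p q"

text \<open>Profiles: x :: nat => 'v pt, players are 1..n.\<close>

definition occupied :: "nat \<Rightarrow> (nat \<Rightarrow> 'v pt) \<Rightarrow> 'v pt set" where
  "occupied n x = x ` {1..n}"

definition closest ::
  "('v \<times> 'v) set \<Rightarrow> ('v \<times> 'v \<Rightarrow> real) \<Rightarrow> nat \<Rightarrow> (nat \<Rightarrow> 'v pt) \<Rightarrow> 'v pt \<Rightarrow> 'v pt set" where
  "closest E lam n x y =
     {z \<in> occupied n x. \<forall>z'\<in>occupied n x. pdist E lam y z \<le> pdist E lam y z'}"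

definition share ::
  "('v \<times> 'v) set \<Rightarrow> ('v \<times> 'v \<Rightarrow> real) \<Rightarrow> nat \<Rightarrow> (nat \<Rightarrow> 'v pt) \<Rightarrow> nat \<Rightarrow> 'v pt \<Rightarrow> real" where
  "share E lam n x i y =
     (if x i \<in> closest E lam n x y
      then 1 / (real (card (closest E lam n x y)) * real (card {j \<in> {1..n}. x j = x i}))
      else 0)"

text \<open>Payoff: integral of the share against the length measure (vertices are
null sets, so only edge interiors contribute).\<close>
definition payoff ::
  "('v \<times> 'v) set \<Rightarrow> ('v \<times> 'v \<Rightarrow> real) \<Rightarrow> nat \<Rightarrow> (nat \<Rightarrow> 'v pt) \<Rightarrow> nat \<Rightarrow> real" where
  "payoff E lam n x i =
     (\<Sum>e\<in>E. LINT t:{0<..<lam e}|lborel. share E lam n x i (Mid e t))"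

definition profile :: "'v set \<Rightarrow> ('v \<times> 'v) set \<Rightarrow> ('v \<times> 'v \<Rightarrow> real) \<Rightarrow> nat \<Rightarrow> (nat \<Rightarrow> 'v pt) \<Rightarrow> bool" where
  "profile V E lam n x \<longleftrightarrow> (\<forall>i\<in>{1..n}. x i \<in> points V E lam)"

definition nash_eq :: "'v set \<Rightarrow> ('v \<times> 'v) set \<Rightarrow> ('v \<times> 'v \<Rightarrow> real) \<Rightarrow> nat \<Rightarrow> (nat \<Rightarrow> 'v pt) \<Rightarrow> bool" where
  "nash_eq V E lam n x \<longleftrightarrow> profile V E lam n x \<and>
     (\<forall>i\<in>{1..n}. \<forall>y\<in>points V E lam. payoff E lam n (x(i := y)) i \<le> payoff E lam n x i)"

definition vertex_property :: "'v set \<Rightarrow> ('v \<times> 'v) set \<Rightarrow> nat \<Rightarrow> (nat \<Rightarrow> 'v pt) \<Rightarrow> bool" where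
  "vertex_property V E n x \<longleftrightarrow> (\<forall>v\<in>V. vdeg E v \<ge> 3 \<longrightarrow> (\<exists>i\<in>{1..n}. x i = Vtx v))"

end

theory Submission
  imports Defs
begin

text \<open>Suppose k > degree(w) players sit at w and let i be one of them.  For each direction
leaving w, call its reach the length of the stretch of consumers in that direction that are
not strictly closer to some other location: half the distance to the next occupied location
ahead, or the whole rest of the edge if nothing lies ahead -- then the far end is an
unoccupied vertex, hence a leaf by the vertex property and the absence of degree-2 vertices.
Player i shares all she gets with the other players at w, so her payoff is at most the sum of
the reaches divided by k, which is less than the largest reach.  Moving a small distance
\<delta> into that direction, however, she becomes the only closest location for all consumers
between \<delta>/2 and the reach, contradicting equilibrium.\<close>

definition opposite :: "'v \<times> 'v \<Rightarrow> 'v \<Rightarrow> 'v" where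
  "opposite e c = (if c = fst e then snd e else fst e)"

lemma opposite_opposite: "c = fst e \<or> c = snd e \<Longrightarrow> opposite e (opposite e c) = c"
  unfolding opposite_def by auto

lemma set_integral_Ioo_nonneg:
  fixes f :: "real \<Rightarrow> real"
  assumes "\<And>t. 0 \<le> f t"
  shows "0 \<le> (LINT t:{0<..<l}|lborel. f t)"
  unfolding set_lebesgue_integral_def using assms by (intro integral_nonneg_AE) (auto simp: indicator_def)

lemma set_integral_Ioo_le_indicator:
  fixes f :: "real \<Rightarrow> real"
  assumes "\<And>t. 0 < t \<Longrightarrow> t < l \<Longrightarrow> 0 \<le> f t"
    and "\<And>t. 0 < t \<Longrightarrow> t < l \<Longrightarrow> f t \<le> c * indicator {\<alpha>..\<beta>} t" "0 \<le> c" "\<alpha> \<le> \<beta>"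
  shows "(LINT t:{0<..<l}|lborel. f t) \<le> c * (\<beta> - \<alpha>)"
proof -
  let ?g = "\<lambda>t. c * indicator {\<alpha>..\<beta>} t :: real"
  have le: "indicator {0<..<l} t *\<^sub>R f t \<le> ?g t" for t
    using assms(1,2)[of t] assms(3) by (auto simp: indicator_def)
  have ig: "integrable lborel ?g"
    using assms(4) by (intro integrable_mult_right integrable_real_indicator) (auto simp: emeasure_lborel_Icc)
  \<comment> \<open>If f is not integrable its integral is the junk value 0.\<close>
  have "integral\<^sup>L lborel (\<lambda>t. indicator {0<..<l} t *\<^sub>R f t) \<le> integral\<^sup>L lborel ?g"
  proof (cases "integrable lborel (\<lambda>t. indicator {0<..<l} t *\<^sub>R f t)")
    case True
    then show ?thesis using ig le by (intro integral_mono) auto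
  next
    case False
    moreover have "0 \<le> integral\<^sup>L lborel ?g" using assms(3) by (intro integral_nonneg_AE) auto
    ultimately show ?thesis by (simp add: not_integrable_integral_eq)
  qed
  then show ?thesis unfolding set_lebesgue_integral_def using assms(4) by simp
qed

lemma set_integral_Ioo_ge_length:
  fixes f :: "real \<Rightarrow> real"
  assumes meas: "f \<in> borel_measurable lborel" and bounds: "\<And>t. 0 \<le> f t" "\<And>t. f t \<le> 1"
    and one: "\<And>t. \<alpha> < t \<Longrightarrow> t < \<beta> \<Longrightarrow> f t = 1" and ab: "0 \<le> \<alpha>" "\<alpha> \<le> \<beta>" "\<beta> \<le> l"
  shows "\<beta> - \<alpha> \<le> (LINT t:{0<..<l}|lborel. f t)"
proof -
  have "integrable lborel (\<lambda>t. indicator {0<..<l} t *\<^sub>R f t)"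
  proof (rule integrableI_bounded_set[where A="{0<..<l}" and B=1])
    show "AE x\<in>{0<..<l} in lborel. norm (indicator {0<..<l} x *\<^sub>R f x) \<le> 1"
      using bounds by (auto simp: indicator_def)
  qed (use meas ab in \<open>auto simp: emeasure_lborel_Ioo\<close>)
  moreover have "integrable lborel (\<lambda>t. indicator {\<alpha><..<\<beta>} t :: real)"
    using ab by (intro integrable_real_indicator) (auto simp: emeasure_lborel_Ioo)
  moreover have "indicator {\<alpha><..<\<beta>} t \<le> indicator {0<..<l} t *\<^sub>R f t" for t
    using one[of t] ab bounds(1)[of t] by (auto simp: indicator_def)
  ultimately have "integral\<^sup>L lborel (\<lambda>t. indicator {\<alpha><..<\<beta>} t :: real)
      \<le> integral\<^sup>L lborel (\<lambda>t. indicator {0<..<l} t *\<^sub>R f t)"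
    by (intro integral_mono) auto
  then show ?thesis unfolding set_lebesgue_integral_def using ab by simp
qed

locale metric_graph =
  fixes V :: "'v set" and E :: "('v \<times> 'v) set" and lam :: "'v \<times> 'v \<Rightarrow> real"
  assumes network: "network V E lam"
begin

lemma finite_vertices: "finite V"
  and edges_subset: "E \<subseteq> V \<times> V"
  and edges_nonempty: "E \<noteq> {}"
  and edge_irrefl_asym: "(u, v) \<in> E \<Longrightarrow> u \<noteq> v \<and> (v, u) \<notin> E"
  and lam_pos: "e \<in> E \<Longrightarrow> lam e > 0"
  and walk_exists: "u \<in> V \<Longrightarrow> v \<in> V \<Longrightarrow> \<exists>ws. is_walk E ws \<and> hd ws = u \<and> last ws = v"
  using network unfolding network_def by blast+

lemma finite_edges: "finite E"
  using finite_vertices edges_subset finite_subset by blast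

lemma edge_ends_in_V: "(a, b) \<in> E \<Longrightarrow> a \<in> V \<and> b \<in> V"
  using edges_subset by auto

lemma end_in_V: "e \<in> E \<Longrightarrow> c = fst e \<or> c = snd e \<Longrightarrow> c \<in> V"
  using edge_ends_in_V[of "fst e" "snd e"] by auto

lemma opposite_end:
  "e \<in> E \<Longrightarrow> c = fst e \<or> c = snd e \<Longrightarrow> (opposite e c = fst e \<or> opposite e c = snd e) \<and> opposite e c \<noteq> c"
  unfolding opposite_def using edge_irrefl_asym[of "fst e" "snd e"] by auto

subsection \<open>Walks and the vertex distance\<close>

lemma elen_pos: "adj E u v \<Longrightarrow> elen E lam u v > 0"
  unfolding adj_def elen_def using lam_pos by auto

lemma elen_forward: "(u, v) \<in> E \<Longrightarrow> elen E lam u v = lam (u, v)"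
  unfolding elen_def by auto

lemma elen_backward: "(v, u) \<in> E \<Longrightarrow> elen E lam u v = lam (v, u)"
  unfolding elen_def using edge_irrefl_asym by auto

lemma elen_opposite: "e \<in> E \<Longrightarrow> c = fst e \<or> c = snd e \<Longrightarrow> elen E lam c (opposite e c) = lam e"
  using elen_forward[of "fst e" "snd e"] elen_backward[of "fst e" "snd e"]
    edge_irrefl_asym[of "fst e" "snd e"]
  unfolding opposite_def by (cases e) auto

lemma walk_len_nonneg: "is_walk E ws \<Longrightarrow> walk_len E lam ws \<ge> 0"
  unfolding walk_len_def is_walk_def
  by (intro sum_nonneg) (metis elen_pos less_imp_le lessThan_iff less_diff_conv add.commute plus_1_eq_Suc)

lemma walk_singleton: "is_walk E [u]" "walk_len E lam [u] = 0"
  unfolding is_walk_def walk_len_def by auto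

lemma walk_length_ge_2: "is_walk E ws \<Longrightarrow> hd ws \<noteq> last ws \<Longrightarrow> length ws \<ge> 2"
  unfolding is_walk_def by (cases ws; cases "tl ws") auto

lemma walk_tl:
  assumes "is_walk E ws" "length ws \<ge> 2"
  shows "walk_len E lam ws = elen E lam (ws ! 0) (ws ! 1) + walk_len E lam (tl ws)"
    and "is_walk E (tl ws)" "hd (tl ws) = ws ! 1" "last (tl ws) = last ws"
    and "adj E (ws ! 0) (ws ! 1)"
proof -
  have m: "length ws - 1 = Suc (length ws - 2)" "length (tl ws) - 1 = length ws - 2"
    using assms(2) by auto
  show "walk_len E lam ws = elen E lam (ws ! 0) (ws ! 1) + walk_len E lam (tl ws)"
    unfolding walk_len_def m sum.lessThan_Suc_shift using assms(2) by (cases ws) (auto simp: nth_tl)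
  show "is_walk E (tl ws)" using assms unfolding is_walk_def by (cases ws) auto
  show "hd (tl ws) = ws ! 1" using assms(2) by (cases ws; cases "tl ws") auto
  show "last (tl ws) = last ws" using assms(2) by (cases ws) auto
  show "adj E (ws ! 0) (ws ! 1)" using assms unfolding is_walk_def by auto
qed

lemma dV_le_walk_len: "is_walk E ws \<Longrightarrow> hd ws = u \<Longrightarrow> last ws = v \<Longrightarrow> dV E lam u v \<le> walk_len E lam ws"
  unfolding dV_def by (rule cInf_lower) (auto simp: bdd_below_def intro!: exI[of _ 0] walk_len_nonneg)

lemma dV_greatest:
  assumes "u \<in> V" "v \<in> V"
    and "\<And>ws. is_walk E ws \<Longrightarrow> hd ws = u \<Longrightarrow> last ws = v \<Longrightarrow> b \<le> walk_len E lam ws"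
  shows "b \<le> dV E lam u v"
  unfolding dV_def using walk_exists[OF assms(1,2)] assms(3) by (intro cInf_greatest) auto

lemma dV_nonneg: "u \<in> V \<Longrightarrow> v \<in> V \<Longrightarrow> dV E lam u v \<ge> 0"
  by (rule dV_greatest) (auto intro: walk_len_nonneg)

lemma dV_refl: "u \<in> V \<Longrightarrow> dV E lam u u = 0"
  using dV_le_walk_len[OF walk_singleton(1), of u u] dV_nonneg[of u u] by (simp add: walk_singleton)

lemma dV_pos:
  assumes "u \<in> V" "v \<in> V" "u \<noteq> v"
  shows "dV E lam u v > 0"
proof -
  \<comment> \<open>dV is an infimum over infinitely many walks, so a uniform bound is needed.\<close>
  define \<mu> where "\<mu> = Min (lam ` E)"
  have \<mu>: "0 < \<mu>" unfolding \<mu>_def using finite_edges edges_nonempty lam_pos by (subst Min_gr_iff) auto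
  have "\<mu> \<le> dV E lam u v"
  proof (rule dV_greatest[OF assms(1,2)])
    fix ws assume ws: "is_walk E ws" "hd ws = u" "last ws = v"
    have "length ws \<ge> 2" using walk_length_ge_2[OF ws(1)] ws assms(3) by simp
    note tl = walk_tl[OF ws(1) this]
    have "\<mu> \<le> elen E lam (ws ! 0) (ws ! 1)"
      using tl(5) finite_edges elen_forward elen_backward unfolding adj_def \<mu>_def by (auto intro: Min_le)
    then show "\<mu> \<le> walk_len E lam ws" using tl(1) walk_len_nonneg[OF tl(2)] by linarith
  qed
  with \<mu> show ?thesis by linarith
qed

subsection \<open>Leaves\<close>

definition incident :: "'v \<Rightarrow> ('v \<times> 'v) set" where
  "incident u = {e \<in> E. fst e = u \<or> snd e = u}"

lemma vdeg_eq_card_incident: "vdeg E u = card (incident u)"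
  unfolding vdeg_def incident_def ..

lemma finite_incident: "finite (incident u)"
  unfolding incident_def using finite_edges by simp

lemma vdeg_ge_1:
  assumes "u \<in> V"
  shows "vdeg E u \<ge> 1"
proof -
  obtain p q where pq: "(p, q) \<in> E" using edges_nonempty by auto
  then obtain r where r: "r \<in> V" "r \<noteq> u" using edge_ends_in_V edge_irrefl_asym by metis
  obtain ws where ws: "is_walk E ws" "hd ws = u" "last ws = r" using walk_exists[OF assms r(1)] by blast
  have "length ws \<ge> 2" using walk_length_ge_2[OF ws(1)] ws r by simp
  moreover have "ws ! 0 = u" using ws(2) \<open>length ws \<ge> 2\<close> by (cases ws) auto
  ultimately have "adj E u (ws ! 1)" using walk_tl(5)[OF ws(1)] by simp
  then have "incident u \<noteq> {}" unfolding adj_def incident_def by force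
  then show ?thesis unfolding vdeg_eq_card_incident using finite_incident by (simp add: Suc_leI card_gt_0_iff)
qed

lemma leaf_incident_unique:
  assumes "vdeg E u = 1" "e \<in> E" "fst e = u \<or> snd e = u" "e' \<in> E" "fst e' = u \<or> snd e' = u"
  shows "e' = e"
proof -
  obtain f where "incident u = {f}"
    using assms(1) card_1_singletonE unfolding vdeg_eq_card_incident by metis
  moreover have "e \<in> incident u" "e' \<in> incident u" using assms(2-5) unfolding incident_def by auto
  ultimately show ?thesis by auto
qed

lemma leaf_adj_opposite:
  assumes "vdeg E u = 1" "e \<in> E" "fst e = u \<or> snd e = u" "adj E u d"
  shows "d = opposite e u"
  using assms(4) unfolding adj_def
proof
  assume h: "(u, d) \<in> E"
  then have "(u, d) = e" using leaf_incident_unique[OF assms(1-3) h] by auto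
  then show ?thesis unfolding opposite_def using edge_irrefl_asym h by auto
next
  assume h: "(d, u) \<in> E"
  then have "(d, u) = e" using leaf_incident_unique[OF assms(1-3) h] by auto
  then show ?thesis unfolding opposite_def using edge_irrefl_asym h by auto
qed

lemma dV_leaf_ge:
  assumes "vdeg E u = 1" "e \<in> E" "fst e = u \<or> snd e = u" "d \<in> V" "d \<noteq> u"
  shows "dV E lam u d \<ge> lam e + dV E lam (opposite e u) d"
proof (rule dV_greatest)
  show "u \<in> V" using end_in_V assms(2,3) by metis
  fix ws assume ws: "is_walk E ws" "hd ws = u" "last ws = d"
  have l: "length ws \<ge> 2" using walk_length_ge_2 ws assms(5) by auto
  note tl = walk_tl[OF ws(1) l]
  have h0: "ws ! 0 = u" using ws(2) l by (cases ws) auto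
  have h1: "ws ! 1 = opposite e u" using leaf_adj_opposite[OF assms(1-3)] tl(5) h0 by auto
  have "dV E lam (opposite e u) d \<le> walk_len E lam (tl ws)"
    using dV_le_walk_len[OF tl(2)] tl(3,4) h1 ws(3) by auto
  moreover have "elen E lam (ws ! 0) (ws ! 1) = lam e"
    unfolding h0 h1 using elen_opposite[OF assms(2)] assms(3) by metis
  ultimately show "lam e + dV E lam (opposite e u) d \<le> walk_len E lam ws" using tl(1) by linarith
qed (use assms in auto)

subsection \<open>Distances between points\<close>

definition vdist :: "'v \<Rightarrow> 'v pt \<Rightarrow> real" where
  "vdist d q = Min {dV E lam d c + r | c r. (c, r) \<in> ends lam q}"

lemma vdist_Vtx [simp]: "vdist d (Vtx u) = dV E lam d u"
  unfolding vdist_def by simp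

lemma vdist_Mid: "vdist d (Mid (a, b) t) = min (dV E lam d a + t) (dV E lam d b + (lam (a, b) - t))"
proof -
  have "{dV E lam d c + r | c r. (c, r) \<in> ends lam (Mid (a, b) t)} =
        {dV E lam d a + t, dV E lam d b + (lam (a, b) - t)}" by auto
  then show ?thesis unfolding vdist_def by simp
qed

lemma dvia_Mid: "dvia E lam (Mid (a, b) t) q = min (t + vdist a q) (lam (a, b) - t + vdist b q)"
proof (cases q)
  case (Vtx u)
  have "{s + dV E lam a' b' + r | a' s b' r. (a', s) \<in> ends lam (Mid (a, b) t) \<and> (b', r) \<in> ends lam q}
     = {t + dV E lam a u, lam (a, b) - t + dV E lam b u}" unfolding Vtx by auto
  then show ?thesis unfolding dvia_def Vtx by (simp add: ac_simps)
next
  case (Mid e' t')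
  obtain a' b' where e': "e' = (a', b')" by (cases e')
  have "{s + dV E lam a'' b'' + r | a'' s b'' r. (a'', s) \<in> ends lam (Mid (a, b) t) \<and> (b'', r) \<in> ends lam q}
     = {t + dV E lam a a' + t', t + dV E lam a b' + (lam (a', b') - t'),
        lam (a, b) - t + dV E lam b a' + t', lam (a, b) - t + dV E lam b b' + (lam (a', b') - t')}"
    unfolding Mid e' by auto
  then show ?thesis
    unfolding dvia_def Mid e' vdist_Mid by (simp add: min_add_distrib_left min_add_distrib_right ac_simps)
qed

lemma pdist_Mid:
  "pdist E lam (Mid (a, b) t) z =
     (case z of
        Mid e' t' \<Rightarrow> if e' = (a, b) then min \<bar>t - t'\<bar> (min (t + vdist a z) (lam (a, b) - t + vdist b z))
                    else min (t + vdist a z) (lam (a, b) - t + vdist b z)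
      | Vtx u \<Rightarrow> min (t + vdist a z) (lam (a, b) - t + vdist b z))"
  using dvia_Mid[of a b t z] by (cases z) auto

lemma points_cases:
  assumes "q \<in> points V E lam"
  obtains u where "q = Vtx u" "u \<in> V"
  | a b t where "q = Mid (a, b) t" "(a, b) \<in> E" "0 < t" "t < lam (a, b)"
  using assms unfolding points_def by auto

lemma Mid_in_pointsD: "Mid e t \<in> points V E lam \<Longrightarrow> e \<in> E \<and> 0 < t \<and> t < lam e"
  unfolding points_def by auto

lemma vdist_nonneg:
  assumes "d \<in> V" "q \<in> points V E lam"
  shows "0 \<le> vdist d q"
  using assms(2)
proof (cases rule: points_cases)
  case (1 u) then show ?thesis using dV_nonneg assms(1) by simp
next
  case (2 a b t) then show ?thesis using dV_nonneg[OF assms(1)] edge_ends_in_V[of a b] by (simp add: vdist_Mid)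
qed

lemma vdist_pos:
  assumes "d \<in> V" "q \<in> points V E lam" "q \<noteq> Vtx d"
  shows "0 < vdist d q"
  using assms(2)
proof (cases rule: points_cases)
  case (1 u) then show ?thesis using dV_pos assms(1,3) by simp
next
  case (2 a b t)
  have "0 \<le> dV E lam d a" "0 \<le> dV E lam d b" using dV_nonneg[OF assms(1)] edge_ends_in_V[OF 2(2)] by auto
  then show ?thesis using 2 by (simp add: vdist_Mid)
qed

lemma vdist_leaf_ge:
  assumes "vdeg E u = 1" "e \<in> E" "fst e = u \<or> snd e = u" "q \<in> points V E lam"
    and "q \<noteq> Vtx u" "\<forall>t. q \<noteq> Mid e t"
  shows "vdist u q \<ge> lam e + vdist (opposite e u) q"
  using assms(4)
proof (cases rule: points_cases)
  case (1 w)
  then show ?thesis using dV_leaf_ge[OF assms(1-3), of w] assms(5) by simp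
next
  case (2 a b t)
  then have "a \<noteq> u" "b \<noteq> u" using leaf_incident_unique[OF assms(1-3), of "(a,b)"] assms(6) by auto
  then show ?thesis using dV_leaf_ge[OF assms(1-3), of a] dV_leaf_ge[OF assms(1-3), of b] edge_ends_in_V[OF 2(2)]
    unfolding 2 vdist_Mid by (simp add: min_def)
qed

lemma vdist_leaf_opposite:
  assumes "vdeg E u = 1" "e \<in> E" "fst e = u \<or> snd e = u"
  shows "vdist u (Vtx (opposite e u)) \<ge> lam e"
proof -
  have o: "opposite e u = fst e \<or> opposite e u = snd e" "opposite e u \<noteq> u"
    using opposite_end[OF assms(2)] assms(3) by metis+
  then have "opposite e u \<in> V" using end_in_V[OF assms(2)] by blast
  then show ?thesis using dV_leaf_ge[OF assms(1-3), of "opposite e u"] o(2) dV_refl by simp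
qed

subsection \<open>Positions along an edge\<close>

text \<open>Mid e t is parametrised from fst e; coord e c s is the parameter of the point at
distance s from the end c.\<close>

definition coord :: "'v \<times> 'v \<Rightarrow> 'v \<Rightarrow> real \<Rightarrow> real" where
  "coord e c s = (if c = fst e then s else lam e - s)"

lemma coord_coord [simp]: "coord e c (coord e c s) = s"
  unfolding coord_def by auto

lemma coord_in_edge: "0 < s \<Longrightarrow> s < lam e \<Longrightarrow> 0 < coord e c s \<and> coord e c s < lam e"
  unfolding coord_def by auto

lemma Mid_coord_in_points: "e \<in> E \<Longrightarrow> 0 < s \<Longrightarrow> s < lam e \<Longrightarrow> Mid e (coord e c s) \<in> points V E lam"
  unfolding points_def using coord_in_edge by blast

lemma vdist_leaf_Mid:
  assumes "vdeg E u = 1" "e \<in> E" "fst e = u \<or> snd e = u" "0 < t" "t < lam e"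
  shows "vdist u (Mid e t) \<ge> lam e - coord e (opposite e u) t"
proof -
  obtain a b where e: "e = (a, b)" by (cases e)
  have ab: "a \<in> V" "b \<in> V" "a \<noteq> b" using edge_ends_in_V edge_irrefl_asym assms(2) unfolding e by auto
  consider "u = a" "opposite e u = b" | "u = b" "opposite e u = a"
    using assms(3) ab unfolding e opposite_def by auto
  then show ?thesis
  proof cases
    case 1 then show ?thesis using dV_leaf_ge[OF assms(1-3), of b] dV_refl ab dV_nonneg assms(4,5)
      unfolding e vdist_Mid coord_def by (auto simp: min_def)
  next
    case 2 then show ?thesis using dV_leaf_ge[OF assms(1-3), of a] dV_refl ab dV_nonneg assms(4,5)
      unfolding e vdist_Mid coord_def by (auto simp: min_def)
  qed
qed

lemma pdist_Mid_coord:
  assumes "e \<in> E" "c = fst e \<or> c = snd e"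
  shows "pdist E lam (Mid e (coord e c s)) q =
    (case q of
       Mid e' t' \<Rightarrow> if e' = e then min \<bar>s - coord e c t'\<bar> (min (s + vdist c q) (lam e - s + vdist (opposite e c) q))
                   else min (s + vdist c q) (lam e - s + vdist (opposite e c) q)
     | Vtx u \<Rightarrow> min (s + vdist c q) (lam e - s + vdist (opposite e c) q))"
proof -
  obtain a b where e: "e = (a, b)" by (cases e)
  have "\<bar>coord e c s - t'\<bar> = \<bar>s - coord e c t'\<bar>" for t' unfolding coord_def by auto
  then show ?thesis
    using assms(2) unfolding pdist_Mid[of a b, folded e] unfolding e coord_def opposite_def
    by (cases q) (auto simp: min_def)
qed

lemma pdist_Mid_coord_off_edge:
  assumes "e \<in> E" "c = fst e \<or> c = snd e" "\<forall>t. q \<noteq> Mid e t"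
  shows "pdist E lam (Mid e (coord e c s)) q = min (s + vdist c q) (lam e - s + vdist (opposite e c) q)"
  using pdist_Mid_coord[OF assms(1,2), of s q] assms(3) by (cases q) auto

lemma pdist_Mid_coord_same_edge:
  assumes "e \<in> E" "c = fst e \<or> c = snd e"
  shows "pdist E lam (Mid e (coord e c s)) (Mid e (coord e c \<sigma>)) =
     min \<bar>s - \<sigma>\<bar> (min (s + vdist c (Mid e (coord e c \<sigma>)))
                       (lam e - s + vdist (opposite e c) (Mid e (coord e c \<sigma>))))"
  using pdist_Mid_coord[OF assms, of s "Mid e (coord e c \<sigma>)"] by simp

lemma pdist_Mid_coord_end_le:
  assumes "e \<in> E" "c = fst e \<or> c = snd e"
  shows "pdist E lam (Mid e (coord e c s)) (Vtx c) \<le> s"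
  using pdist_Mid_coord_off_edge[OF assms, of "Vtx c" s] dV_refl[OF end_in_V[OF assms]] by simp

lemma pdist_Mid_coord_opposite_le:
  assumes "e \<in> E" "c = fst e \<or> c = snd e"
  shows "pdist E lam (Mid e (coord e c s)) (Vtx (opposite e c)) \<le> lam e - s"
  using pdist_Mid_coord_off_edge[OF assms, of "Vtx (opposite e c)" s]
    dV_refl[OF end_in_V[OF assms(1)]] opposite_end[OF assms] by simp

lemma pdist_Mid_coord_Mid_le:
  assumes "e \<in> E" "c = fst e \<or> c = snd e"
  shows "pdist E lam (Mid e (coord e c s)) (Mid e (coord e c \<sigma>)) \<le> \<bar>s - \<sigma>\<bar>"
  using pdist_Mid_coord_same_edge[OF assms] by simp

subsection \<open>Edges whose ends are occupied or leaves\<close>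

definition ends_served :: "'v pt set \<Rightarrow> 'v \<times> 'v \<Rightarrow> bool" where
  "ends_served Oc e \<longleftrightarrow> (\<forall>u. u = fst e \<or> u = snd e \<longrightarrow> Vtx u \<in> Oc \<or> vdeg E u = 1)"

lemma ends_servedD: "ends_served Oc e \<Longrightarrow> u = fst e \<or> u = snd e \<Longrightarrow> Vtx u \<notin> Oc \<Longrightarrow> vdeg E u = 1"
  unfolding ends_served_def by blast

lemma ends_served_if_vertex_property:
  assumes "\<forall>v\<in>V. vdeg E v \<noteq> 2" "vertex_property V E n x" "e \<in> E"
  shows "ends_served (occupied n x) e"
  unfolding ends_served_def
proof (intro allI impI)
  fix u assume u: "u = fst e \<or> u = snd e"
  then have "u \<in> V" using end_in_V[OF assms(3)] by blast
  moreover have "vdeg E u \<ge> 3 \<Longrightarrow> Vtx u \<in> occupied n x"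
    using assms(2) \<open>u \<in> V\<close> unfolding vertex_property_def occupied_def by (metis image_eqI)
  ultimately show "Vtx u \<in> occupied n x \<or> vdeg E u = 1"
    using vdeg_ge_1 assms(1) by (metis One_nat_def Suc_1 le_antisym not_less_eq_eq numeral_3_eq_3)
qed

text \<open>An unoccupied end of a served edge is a leaf, so a location off the edge is reached
only through an occupied end.\<close>

lemma occupied_closer_off_edge:
  assumes Oc: "Oc \<subseteq> points V E lam" and served: "ends_served Oc e"
    and e: "e \<in> E" and w: "w \<in> Oc" "w \<noteq> Vtx (fst e)" "w \<noteq> Vtx (snd e)" "\<forall>t. w \<noteq> Mid e t"
    and s: "0 < s" "s < lam e"
  shows "\<exists>z\<in>Oc. pdist E lam (Mid e s) z < pdist E lam (Mid e s) w"
proof -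
  define a b where "a = fst e" and "b = snd e"
  have ab: "a = fst e \<or> a = snd e" "b = fst e \<or> b = snd e" "opposite e a = b" "opposite e b = a"
    unfolding a_def b_def opposite_def using edge_irrefl_asym[of "fst e" "snd e"] e by auto
  have ca: "coord e a s = s" unfolding coord_def a_def by simp
  have wp: "w \<in> points V E lam" using w Oc by auto
  have A: "vdist a w > 0" using vdist_pos[OF end_in_V[OF e ab(1)] wp] w unfolding a_def by auto
  have B: "vdist b w > 0" using vdist_pos[OF end_in_V[OF e ab(2)] wp] w unfolding b_def by auto
  have pw: "pdist E lam (Mid e s) w = min (s + vdist a w) (lam e - s + vdist b w)"
    using pdist_Mid_coord_off_edge[OF e ab(1) w(4), of s] ab ca by simp
  have pa: "pdist E lam (Mid e s) (Vtx a) \<le> s" using pdist_Mid_coord_end_le[OF e ab(1), of s] ca by simp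
  have pb: "pdist E lam (Mid e s) (Vtx b) \<le> lam e - s"
    using pdist_Mid_coord_opposite_le[OF e ab(1), of s] ab ca by simp
  have la: "vdist a w \<ge> lam e + vdist b w" if "Vtx a \<notin> Oc"
    using vdist_leaf_ge[OF ends_servedD[OF served ab(1) that] e _ wp] ab w unfolding a_def b_def by auto
  have lb: "vdist b w \<ge> lam e + vdist a w" if "Vtx b \<notin> Oc"
    using vdist_leaf_ge[OF ends_servedD[OF served ab(2) that] e _ wp] ab w unfolding a_def b_def by auto
  have "lam e > 0" using lam_pos e by auto
  then consider "Vtx a \<in> Oc" "Vtx b \<in> Oc" | "Vtx a \<in> Oc" "Vtx b \<notin> Oc" | "Vtx a \<notin> Oc" "Vtx b \<in> Oc"
    using la lb by force
  then show ?thesis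
  proof cases
    case 1 then show ?thesis using pa pb pw A B s by (cases "s \<le> lam e - s") force+
  next
    case 2 then show ?thesis using pa pw A lb s by force
  next
    case 3 then show ?thesis using pb pw B la s by force
  qed
qed

subsection \<open>The reach of a direction\<close>

definition ahead :: "'v pt set \<Rightarrow> 'v \<times> 'v \<Rightarrow> 'v \<Rightarrow> real \<Rightarrow> real set" where
  "ahead Oc e c \<sigma>0 = {\<sigma>. \<sigma>0 < \<sigma> \<and> \<sigma> \<le> lam e \<and>
     ((\<sigma> = lam e \<and> Vtx (opposite e c) \<in> Oc) \<or> (\<sigma> < lam e \<and> Mid e (coord e c \<sigma>) \<in> Oc))}"

definition reach :: "'v pt set \<Rightarrow> 'v \<times> 'v \<Rightarrow> 'v \<Rightarrow> real \<Rightarrow> real" where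
  "reach Oc e c \<sigma>0 = (if ahead Oc e c \<sigma>0 = {} then lam e - \<sigma>0 else (Min (ahead Oc e c \<sigma>0) - \<sigma>0) / 2)"

definition located :: "'v \<times> 'v \<Rightarrow> 'v \<Rightarrow> 'v pt \<Rightarrow> real \<Rightarrow> bool" where
  "located e c w \<sigma>0 \<longleftrightarrow> (w = Vtx c \<and> \<sigma>0 = 0) \<or> (0 < \<sigma>0 \<and> \<sigma>0 < lam e \<and> w = Mid e (coord e c \<sigma>0))"

lemma finite_ahead:
  assumes "finite Oc"
  shows "finite (ahead Oc e c \<sigma>0)"
proof -
  have "finite {t. Mid e t \<in> Oc}" using finite_vimageI[OF assms, of "Mid e"] by (auto simp: inj_def vimage_def)
  moreover have "ahead Oc e c \<sigma>0 \<subseteq> insert (lam e) (coord e c ` {t. Mid e t \<in> Oc})"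
    unfolding ahead_def by (auto intro!: image_eqI[of _ "coord e c", OF coord_coord[symmetric]])
  ultimately show ?thesis using finite_subset by blast
qed

lemma Min_ahead:
  assumes "finite Oc" "ahead Oc e c \<sigma>0 \<noteq> {}"
  shows "Min (ahead Oc e c \<sigma>0) \<in> ahead Oc e c \<sigma>0" "\<And>\<sigma>. \<sigma> \<in> ahead Oc e c \<sigma>0 \<Longrightarrow> Min (ahead Oc e c \<sigma>0) \<le> \<sigma>"
  using finite_ahead[OF assms(1)] assms(2) by auto

lemma ahead_bounds: "\<sigma> \<in> ahead Oc e c \<sigma>0 \<Longrightarrow> \<sigma>0 < \<sigma> \<and> \<sigma> \<le> lam e"
  unfolding ahead_def by auto

lemma reach_pos_le:
  assumes "finite Oc" "\<sigma>0 < lam e"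
  shows "0 < reach Oc e c \<sigma>0" "\<sigma>0 + reach Oc e c \<sigma>0 \<le> lam e"
proof (atomize (full), cases "ahead Oc e c \<sigma>0 = {}")
  case False
  then have "\<sigma>0 < Min (ahead Oc e c \<sigma>0) \<and> Min (ahead Oc e c \<sigma>0) \<le> lam e"
    using ahead_bounds[OF Min_ahead(1)[OF assms(1)]] by blast
  with False show "0 < reach Oc e c \<sigma>0 \<and> \<sigma>0 + reach Oc e c \<sigma>0 \<le> lam e"
    unfolding reach_def by (simp add: field_simps)
qed (use assms(2) in \<open>simp add: reach_def\<close>)

lemma reach_le_ahead:
  assumes "finite Oc" "\<sigma> \<in> ahead Oc e c \<sigma>0"
  shows "\<sigma>0 + 2 * reach Oc e c \<sigma>0 \<le> \<sigma>"
proof -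
  have "ahead Oc e c \<sigma>0 \<noteq> {}" using assms(2) by blast
  then show ?thesis using Min_ahead(2)[OF assms(1) _ assms(2)] unfolding reach_def by (simp add: field_simps)
qed

lemma located_range: "e \<in> E \<Longrightarrow> located e c w \<sigma>0 \<Longrightarrow> 0 \<le> \<sigma>0 \<and> \<sigma>0 < lam e"
  unfolding located_def using lam_pos[of e] by auto

lemma located_in_points: "e \<in> E \<Longrightarrow> c = fst e \<or> c = snd e \<Longrightarrow> located e c w \<sigma>0 \<Longrightarrow> w \<in> points V E lam"
  unfolding located_def using Mid_coord_in_points end_in_V unfolding points_def by blast

lemma located_ne_opposite: "e \<in> E \<Longrightarrow> c = fst e \<or> c = snd e \<Longrightarrow> located e c w \<sigma>0 \<Longrightarrow> w \<noteq> Vtx (opposite e c)"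
  unfolding located_def using opposite_end[of e c] by auto

lemma pdist_located_ge:
  assumes e: "e \<in> E" and c: "c = fst e \<or> c = snd e" and w: "located e c w \<sigma>0" and s: "\<sigma>0 < s"
  shows "pdist E lam (Mid e (coord e c s)) w \<ge> min (s - \<sigma>0) (lam e - s + vdist (opposite e c) w)"
  using w unfolding located_def
proof
  assume "w = Vtx c \<and> \<sigma>0 = 0"
  then show ?thesis using pdist_Mid_coord_off_edge[OF e c, of w s] dV_refl[OF end_in_V[OF e c]] by simp
next
  assume h: "0 < \<sigma>0 \<and> \<sigma>0 < lam e \<and> w = Mid e (coord e c \<sigma>0)"
  have "0 \<le> vdist c w" using vdist_nonneg[OF end_in_V[OF e c]] Mid_coord_in_points[OF e] h by auto
  then show ?thesis using pdist_Mid_coord_same_edge[OF e c, of s \<sigma>0] h s by (auto simp: min_def)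
qed

lemma vdist_opposite_located:
  assumes e: "e \<in> E" and c: "c = fst e \<or> c = snd e" and leaf: "vdeg E (opposite e c) = 1"
    and "0 \<le> \<sigma>0" and z: "z = Vtx c \<or> (\<exists>t. z = Mid e t \<and> 0 < t \<and> t < lam e \<and> coord e c t \<le> \<sigma>0)"
  shows "vdist (opposite e c) z \<ge> lam e - \<sigma>0"
proof -
  have o: "fst e = opposite e c \<or> snd e = opposite e c" using opposite_end[OF e c] by auto
  from z show ?thesis
  proof
    assume "z = Vtx c"
    then show ?thesis using vdist_leaf_opposite[OF leaf e o] opposite_opposite[OF c] \<open>0 \<le> \<sigma>0\<close> by simp
  next
    assume "\<exists>t. z = Mid e t \<and> 0 < t \<and> t < lam e \<and> coord e c t \<le> \<sigma>0"
    then show ?thesis using vdist_leaf_Mid[OF leaf e o] opposite_opposite[OF c] by force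
  qed
qed

lemma occupied_at_Min_ahead:
  assumes e: "e \<in> E" and c: "c = fst e \<or> c = snd e" and "finite Oc" "ahead Oc e c \<sigma>0 \<noteq> {}"
  shows "\<exists>z\<in>Oc. pdist E lam (Mid e (coord e c s)) z \<le> \<bar>s - Min (ahead Oc e c \<sigma>0)\<bar>"
proof -
  let ?r = "Min (ahead Oc e c \<sigma>0)"
  have r: "?r \<in> ahead Oc e c \<sigma>0" using Min_ahead[OF assms(3,4)] by blast
  show ?thesis
  proof (cases "?r = lam e \<and> Vtx (opposite e c) \<in> Oc")
    case True
    then show ?thesis using pdist_Mid_coord_opposite_le[OF e c, of s] by (intro bexI[of _ "Vtx (opposite e c)"]) auto
  next
    case False
    then have "Mid e (coord e c ?r) \<in> Oc" using r unfolding ahead_def by auto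
    then show ?thesis using pdist_Mid_coord_Mid_le[OF e c, of s ?r] by blast
  qed
qed

lemma occupied_closer_beyond_reach:
  assumes Oc: "Oc \<subseteq> points V E lam" "finite Oc" and served: "ends_served Oc e"
    and e: "e \<in> E" and c: "c = fst e \<or> c = snd e"
    and w: "w \<in> Oc" "located e c w \<sigma>0"
    and s: "s < lam e" "reach Oc e c \<sigma>0 < s - \<sigma>0"
  shows "\<exists>z\<in>Oc. pdist E lam (Mid e (coord e c s)) z < pdist E lam (Mid e (coord e c s)) w"
proof -
  let ?p = "Mid e (coord e c s)" and ?c' = "opposite e c"
  have r0: "0 \<le> \<sigma>0" "\<sigma>0 < lam e" using located_range[OF e w(2)] by auto
  have ne: "ahead Oc e c \<sigma>0 \<noteq> {}" using s unfolding reach_def by (auto split: if_splits)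
  define r where "r = Min (ahead Oc e c \<sigma>0)"
  have rR: "r \<in> ahead Oc e c \<sigma>0" using Min_ahead[OF Oc(2) ne] unfolding r_def by auto
  have r1: "\<sigma>0 < r" "r \<le> lam e" using ahead_bounds[OF rR] by auto
  have s2: "r + \<sigma>0 < 2 * s" using s(2) ne unfolding reach_def r_def by auto
  obtain z where z: "z \<in> Oc" "pdist E lam ?p z \<le> \<bar>s - r\<bar>"
    using occupied_at_Min_ahead[OF e c Oc(2) ne] unfolding r_def by blast
  have lw: "pdist E lam ?p w \<ge> min (s - \<sigma>0) (lam e - s + vdist ?c' w)"
    using pdist_located_ge[OF e c w(2)] s2 r1 by simp
  have o: "?c' = fst e \<or> ?c' = snd e" using opposite_end[OF e c] by auto
  show ?thesis
  proof (cases "Vtx ?c' \<in> Oc")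
    case True
    have D: "vdist ?c' w > 0"
      using vdist_pos[OF end_in_V[OF e o] located_in_points[OF e c w(2)] located_ne_opposite[OF e c w(2)]] .
    show ?thesis
    proof (cases "s - \<sigma>0 \<le> lam e - s + vdist ?c' w")
      case True
      have "\<bar>s - r\<bar> < s - \<sigma>0" using s2 r1 by (simp add: abs_less_iff)
      then show ?thesis using z lw True by (intro bexI[of _ z]) auto
    next
      case False
      then show ?thesis using \<open>Vtx ?c' \<in> Oc\<close> pdist_Mid_coord_opposite_le[OF e c, of s] lw D
        by (intro bexI[of _ "Vtx ?c'"]) (auto simp: min_def)
    qed
  next
    case False
    then have leaf: "vdeg E ?c' = 1" using ends_servedD[OF served o] by auto
    have "vdist ?c' w \<ge> lam e - \<sigma>0"
      using vdist_opposite_located[OF e c leaf r0(1)] w(2) coord_in_edge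
      unfolding located_def by fastforce
    moreover have "r < lam e" using rR False unfolding ahead_def by auto
    ultimately have "\<bar>s - r\<bar> < s - \<sigma>0" "\<bar>s - r\<bar> < lam e - s + vdist ?c' w"
      using s2 r1 r0 s by (simp_all add: abs_less_iff)
    then show ?thesis using z lw by (intro bexI[of _ z]) auto
  qed
qed

lemma vdist_opposite_ge_if_nothing_ahead:
  assumes Oc: "Oc \<subseteq> points V E lam" and served: "ends_served Oc e"
    and e: "e \<in> E" and c: "c = fst e \<or> c = snd e" and r0: "0 \<le> \<sigma>0" "\<sigma>0 < lam e"
    and empty: "ahead Oc e c \<sigma>0 = {}" and z: "z \<in> Oc"
  shows "lam e - \<sigma>0 \<le> vdist (opposite e c) z"
proof -
  let ?c' = "opposite e c"
  have o: "?c' = fst e \<or> ?c' = snd e" "?c' \<noteq> c" using opposite_end[OF e c] by auto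
  have "Vtx ?c' \<notin> Oc" using empty r0 unfolding ahead_def by auto
  then have leaf: "vdeg E ?c' = 1" using ends_servedD[OF served o(1)] by blast
  have zp: "z \<in> points V E lam" using z Oc by blast
  show ?thesis
  proof (cases "z = Vtx c \<or> (\<exists>t. z = Mid e t)")
    case True
    have "coord e c t \<le> \<sigma>0" if "z = Mid e t" "0 < t" "t < lam e" for t
    proof (rule ccontr)
      assume "\<not> coord e c t \<le> \<sigma>0"
      then have "coord e c t \<in> ahead Oc e c \<sigma>0"
        using coord_in_edge[OF that(2,3), of c] z that(1) unfolding ahead_def by auto
      with empty show False by blast
    qed
    then show ?thesis
      using True vdist_opposite_located[OF e c leaf r0(1), of z] Mid_in_pointsD zp by blast
  next
    case False
    then have "vdist ?c' z \<ge> lam e + vdist (opposite e ?c') z"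
      using vdist_leaf_ge[OF leaf e _ zp] o \<open>Vtx ?c' \<notin> Oc\<close> z by metis
    moreover have "0 \<le> vdist c z" using vdist_nonneg[OF end_in_V[OF e c] zp] .
    ultimately show ?thesis using opposite_opposite[OF c] r0 by simp
  qed
qed

lemma reach_le_via_opposite:
  assumes Oc: "Oc \<subseteq> points V E lam" "finite Oc" and served: "ends_served Oc e"
    and e: "e \<in> E" and c: "c = fst e \<or> c = snd e"
    and r0: "0 \<le> \<sigma>0" "\<sigma>0 < lam e" and z: "z \<in> Oc"
  shows "\<sigma>0 + 2 * reach Oc e c \<sigma>0 \<le> lam e + vdist (opposite e c) z"
proof (cases "ahead Oc e c \<sigma>0 = {}")
  case False
  have "Min (ahead Oc e c \<sigma>0) \<le> lam e" using ahead_bounds Min_ahead(1)[OF Oc(2) False] by blast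
  moreover have "0 \<le> vdist (opposite e c) z"
    using vdist_nonneg end_in_V[OF e] opposite_end[OF e c] z Oc(1) by blast
  ultimately show ?thesis using False unfolding reach_def by (simp add: field_simps)
next
  case True
  then show ?thesis
    using vdist_opposite_ge_if_nothing_ahead[OF Oc(1) served e c r0 True z] unfolding reach_def by simp
qed

lemma deviation_strictly_closest:
  assumes Oc: "Oc \<subseteq> points V E lam" "finite Oc" and served: "ends_served Oc e"
    and e: "e \<in> E" and c: "c = fst e \<or> c = snd e" and r0: "0 \<le> \<sigma>0" "\<sigma>0 < lam e"
    and d: "0 < \<delta>" "\<delta> < reach Oc e c \<sigma>0"
    and s: "\<sigma>0 + \<delta> / 2 < s" "s < \<sigma>0 + reach Oc e c \<sigma>0"
    and z: "z \<in> Oc"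
  shows "pdist E lam (Mid e (coord e c s)) (Mid e (coord e c (\<sigma>0 + \<delta>)))
           < pdist E lam (Mid e (coord e c s)) z"
proof -
  let ?p = "Mid e (coord e c s)" and ?r = "reach Oc e c \<sigma>0"
  define \<epsilon> where "\<epsilon> = \<bar>s - (\<sigma>0 + \<delta>)\<bar>"
  have zp: "z \<in> points V E lam" using z Oc(1) by blast
  have near: "\<epsilon> < s - \<sigma>0" "\<epsilon> < s + vdist c z"
    using s d r0 vdist_nonneg[OF end_in_V[OF e c] zp] unfolding \<epsilon>_def by (simp_all add: abs_less_iff)
  have far: "\<epsilon> < lam e - s + vdist (opposite e c) z"
    using reach_le_via_opposite[OF Oc served e c r0 z] s d unfolding \<epsilon>_def by (simp add: abs_less_iff)
  have "\<epsilon> < pdist E lam ?p z"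
  proof (cases "\<exists>t. z = Mid e t")
    case False
    then show ?thesis using pdist_Mid_coord_off_edge[OF e c, of z s] near far by simp
  next
    case True
    then obtain t where zt: "z = Mid e t" by blast
    define \<sigma> where "\<sigma> = coord e c t"
    have z\<sigma>: "z = Mid e (coord e c \<sigma>)" unfolding \<sigma>_def zt by simp
    have "\<epsilon> < \<bar>s - \<sigma>\<bar>"
    proof (cases "\<sigma> \<le> \<sigma>0")
      case False
      have "0 < t" "t < lam e" using Mid_in_pointsD zp zt by auto
      then have "\<sigma> \<in> ahead Oc e c \<sigma>0"
        using coord_in_edge[of t e c] False z z\<sigma> unfolding \<sigma>_def ahead_def by auto
      then have "\<sigma>0 + 2 * ?r \<le> \<sigma>" by (rule reach_le_ahead[OF Oc(2)])
      then show ?thesis using s d unfolding \<epsilon>_def by arith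
    qed (use near in simp)
    then show ?thesis using pdist_Mid_coord_same_edge[OF e c, of s \<sigma>] z\<sigma> near far by simp
  qed
  then show ?thesis using pdist_Mid_coord_Mid_le[OF e c, of s "\<sigma>0 + \<delta>"] unfolding \<epsilon>_def by linarith
qed

lemma deviation_unoccupied:
  assumes "finite Oc" "0 < \<delta>" "\<delta> < reach Oc e c \<sigma>0" "\<sigma>0 + \<delta> < lam e"
  shows "Mid e (coord e c (\<sigma>0 + \<delta>)) \<notin> Oc"
proof
  assume "Mid e (coord e c (\<sigma>0 + \<delta>)) \<in> Oc"
  then have "\<sigma>0 + \<delta> \<in> ahead Oc e c \<sigma>0" using assms(2,4) unfolding ahead_def by auto
  then show False using reach_le_ahead[OF assms(1)] assms(2,3) by fastforce
qed

subsection \<open>Shares and payoffs\<close>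

lemma pdist_Mid_measurable: "(\<lambda>t. pdist E lam (Mid e t) z) \<in> borel_measurable lborel"
proof -
  obtain a b where e: "e = (a, b)" by (cases e)
  show ?thesis
  proof (cases z)
    case (Mid e' t')
    then show ?thesis unfolding e pdist_Mid by (cases "e' = (a, b)") simp_all
  qed (simp add: e pdist_Mid del: pdist.simps)
qed

lemma pred_mem_closest: "Measurable.pred lborel (\<lambda>t. z \<in> closest E lam n x (Mid e t))"
  unfolding closest_def occupied_def mem_Collect_eq
  using pdist_Mid_measurable by (intro pred_intros_logic pred_intros_finite) auto

lemma share_measurable: "(\<lambda>t. share E lam n x i (Mid e t)) \<in> borel_measurable lborel"
proof -
  let ?O = "occupied n x" and ?C = "\<lambda>t. closest E lam n x (Mid e t)"
  have fin: "finite ?O" unfolding occupied_def by simp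
  have sub: "?C t \<subseteq> ?O" for t unfolding closest_def by auto
  have C: "?C \<in> lborel \<rightarrow>\<^sub>M count_space (Pow ?O)"
    unfolding measurable_count_space_eq_countable[OF countable_finite[OF finite_Pow_iff[THEN iffD2, OF fin]]]
  proof (intro conjI Pi_I ballI)
    fix t show "?C t \<in> Pow ?O" using sub by auto
  next
    fix S assume S: "S \<in> Pow ?O"
    have "Measurable.pred lborel (\<lambda>t. \<forall>z\<in>?O. (z \<in> ?C t) = (z \<in> S))"
      using fin pred_mem_closest by (intro pred_intros_finite pred_intros_logic) auto
    moreover have "(\<forall>z\<in>?O. (z \<in> ?C t) = (z \<in> S)) \<longleftrightarrow> ?C t = S" for t using S sub[of t] by blast
    ultimately show "?C -` {S} \<inter> space lborel \<in> sets lborel" by (simp add: pred_def vimage_def Int_def)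
  qed
  have "(\<lambda>t. (\<lambda>S _. if x i \<in> S then 1 / (real (card S) * real (card {j \<in> {1..n}. x j = x i})) else 0)
           (?C t) t) \<in> borel_measurable lborel"
    by (rule measurable_compose_countable'[OF _ C]) (auto simp: fin countable_finite)
  then show ?thesis unfolding share_def by simp
qed

lemma share_nonneg: "share E lam n x i y \<ge> 0"
  unfolding share_def by auto

lemma share_eq_0_if_closer:
  assumes "z \<in> occupied n x" "pdist E lam y z < pdist E lam y (x i)"
  shows "share E lam n x i y = 0"
  using assms unfolding share_def closest_def by force

lemma share_le_inverse_card:
  assumes "i \<in> {1..n}"
  shows "share E lam n x i y \<le> 1 / real (card {j \<in> {1..n}. x j = x i})"
proof (cases "x i \<in> closest E lam n x y")
  case True
  have "finite (closest E lam n x y)" unfolding closest_def occupied_def by simp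
  then have "card (closest E lam n x y) \<ge> 1" using True by (metis One_nat_def Suc_leI card_gt_0_iff empty_iff)
  moreover have "card {j \<in> {1..n}. x j = x i} \<ge> 1" using assms by (auto simp: Suc_le_eq card_gt_0_iff)
  ultimately show ?thesis unfolding share_def using True by (simp add: divide_left_mono)
qed (simp add: share_def)

lemma share_le_1:
  assumes "i \<in> {1..n}"
  shows "share E lam n x i y \<le> 1"
proof -
  have "card {j \<in> {1..n}. x j = x i} \<ge> 1" using assms by (auto simp: Suc_le_eq card_gt_0_iff)
  then have "1 / real (card {j \<in> {1..n}. x j = x i}) \<le> 1" by simp
  then show ?thesis using share_le_inverse_card[OF assms, of x y] by linarith
qed

lemma share_eq_1:
  assumes "i \<in> {1..n}" "closest E lam n x y = {x i}" "\<forall>j\<in>{1..n}. j \<noteq> i \<longrightarrow> x j \<noteq> x i"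
  shows "share E lam n x i y = 1"
proof -
  have "{j \<in> {1..n}. x j = x i} = {i}" using assms(1,3) by auto
  then show ?thesis unfolding share_def using assms(2) by simp
qed

lemma edge_integral_le_payoff:
  "e \<in> E \<Longrightarrow> (LINT t:{0<..<lam e}|lborel. share E lam n x i (Mid e t)) \<le> payoff E lam n x i"
  unfolding payoff_def
  by (rule member_le_sum) (auto intro: set_integral_Ioo_nonneg share_nonneg finite_edges)

lemma nash_occupied_points: "nash_eq V E lam n x \<Longrightarrow> occupied n x \<subseteq> points V E lam"
  unfolding nash_eq_def profile_def occupied_def by auto

subsection \<open>Payoff bounds\<close>

lemma payoff_le_sum_edges:
  assumes "F \<subseteq> E"
    and "\<And>e. e \<in> E - F \<Longrightarrow> (LINT t:{0<..<lam e}|lborel. share E lam n x i (Mid e t)) \<le> 0"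
    and "\<And>e. e \<in> F \<Longrightarrow> (LINT t:{0<..<lam e}|lborel. share E lam n x i (Mid e t)) \<le> b e"
  shows "payoff E lam n x i \<le> (\<Sum>e\<in>F. b e)"
proof -
  have "payoff E lam n x i \<le> (\<Sum>e\<in>E. if e \<in> F then b e else 0)"
    unfolding payoff_def using assms(2,3) by (intro sum_mono) auto
  also have "\<dots> = (\<Sum>e\<in>F. b e)"
    using assms(1) finite_edges by (simp add: sum.If_cases Int_absorb1)
  finally show ?thesis .
qed

lemma edge_integral_off_edge:
  assumes Oc: "occupied n x \<subseteq> points V E lam" and served: "ends_served (occupied n x) e"
    and e: "e \<in> E" and i: "i \<in> {1..n}"
    and w: "x i \<noteq> Vtx (fst e)" "x i \<noteq> Vtx (snd e)" "\<forall>t. x i \<noteq> Mid e t"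
  shows "(LINT t:{0<..<lam e}|lborel. share E lam n x i (Mid e t)) \<le> 0"
proof -
  have "x i \<in> occupied n x" using i unfolding occupied_def by auto
  then have "share E lam n x i (Mid e t) = 0" if "0 < t" "t < lam e" for t
    using occupied_closer_off_edge[OF Oc served e _ w that] share_eq_0_if_closer by blast
  then have "(LINT t:{0<..<lam e}|lborel. share E lam n x i (Mid e t)) \<le> 0 * (0 - 0)"
    by (intro set_integral_Ioo_le_indicator) (auto intro: share_nonneg)
  then show ?thesis by simp
qed

lemma share_le_on_reach:
  assumes Oc: "occupied n x \<subseteq> points V E lam" and served: "ends_served (occupied n x) e"
    and e: "e \<in> E" and c: "c = fst e \<or> c = snd e"
    and i: "i \<in> {1..n}" and w: "located e c (x i) \<sigma>0"
    and t: "0 < t" "t < lam e" "\<sigma>0 < coord e c t"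
  shows "share E lam n x i (Mid e t) \<le> 1 / real (card {j \<in> {1..n}. x j = x i})
           * indicator {\<sigma>0..\<sigma>0 + reach (occupied n x) e c \<sigma>0} (coord e c t)"
proof (cases "reach (occupied n x) e c \<sigma>0 < coord e c t - \<sigma>0")
  case True
  have fin: "finite (occupied n x)" and wi: "x i \<in> occupied n x" using i unfolding occupied_def by auto
  have "coord e c t < lam e" using coord_in_edge[OF t(1,2)] by auto
  then obtain z where "z \<in> occupied n x"
    "pdist E lam (Mid e (coord e c (coord e c t))) z < pdist E lam (Mid e (coord e c (coord e c t))) (x i)"
    using occupied_closer_beyond_reach[OF Oc fin served e c wi w _ True] by blast
  then have "share E lam n x i (Mid e t) = 0" using share_eq_0_if_closer by simp
  then show ?thesis by simp
next
  case False
  then show ?thesis using share_le_inverse_card[OF i] t(3) by (simp add: indicator_def)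
qed

lemma edge_integral_le_reach:
  assumes Oc: "occupied n x \<subseteq> points V E lam" and served: "ends_served (occupied n x) e"
    and e: "e \<in> E" and c: "c = fst e \<or> c = snd e" and i: "i \<in> {1..n}" and w: "x i = Vtx c"
  shows "(LINT t:{0<..<lam e}|lborel. share E lam n x i (Mid e t))
      \<le> reach (occupied n x) e c 0 / real (card {j \<in> {1..n}. x j = x i})"
proof -
  let ?m = "reach (occupied n x) e c 0"
  have m: "0 < ?m" using reach_pos_le(1) lam_pos[OF e] unfolding occupied_def by simp
  define \<alpha> where "\<alpha> = (if c = fst e then 0 else lam e - ?m)"
  have \<alpha>: "indicator {0..?m} (coord e c t) = (indicator {\<alpha>..\<alpha> + ?m} t :: real)" for t
    unfolding \<alpha>_def coord_def indicator_def by auto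
  have "(LINT t:{0<..<lam e}|lborel. share E lam n x i (Mid e t))
      \<le> 1 / real (card {j \<in> {1..n}. x j = x i}) * (\<alpha> + ?m - \<alpha>)"
  proof (rule set_integral_Ioo_le_indicator)
    fix t assume t: "0 < t" "t < lam e"
    then have "0 < coord e c t" using coord_in_edge by blast
    then show "share E lam n x i (Mid e t) \<le> 1 / real (card {j \<in> {1..n}. x j = x i}) * indicator {\<alpha>..\<alpha> + ?m} t"
      using share_le_on_reach[OF Oc served e c i _ t] w \<alpha> unfolding located_def by simp
  qed (use m in \<open>auto intro: share_nonneg\<close>)
  then show ?thesis by simp
qed

lemma deviation_share_eq_1:
  assumes Oc: "occupied n x \<subseteq> points V E lam" and served: "ends_served (occupied n x) e"
    and e: "e \<in> E" and c: "c = fst e \<or> c = snd e" and i: "i \<in> {1..n}"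
    and r0: "0 \<le> \<sigma>0" "\<sigma>0 < lam e"
    and d: "0 < \<delta>" "\<delta> < reach (occupied n x) e c \<sigma>0"
    and s: "\<sigma>0 + \<delta> / 2 < coord e c t" "coord e c t < \<sigma>0 + reach (occupied n x) e c \<sigma>0"
  shows "share E lam n (x(i := Mid e (coord e c (\<sigma>0 + \<delta>)))) i (Mid e t) = 1"
proof -
  let ?O = "occupied n x" and ?y = "Mid e (coord e c (\<sigma>0 + \<delta>))"
  let ?x' = "x(i := ?y)"
  have fin: "finite ?O" unfolding occupied_def by simp
  have closer: "pdist E lam (Mid e t) ?y < pdist E lam (Mid e t) z" if "z \<in> ?O" for z
    using deviation_strictly_closest[OF Oc fin served e c r0 d s that] by simp
  have occ': "occupied n ?x' \<subseteq> insert ?y ?O" and yin: "?y \<in> occupied n ?x'"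
    using i unfolding occupied_def by auto
  have "closest E lam n ?x' (Mid e t) = {?y}"
    using occ' yin closer unfolding closest_def by (fastforce simp: less_imp_le not_le)
  moreover have "?y \<notin> ?O"
    using deviation_unoccupied[OF fin d] reach_pos_le(2)[OF fin r0(2), of c] d by simp
  then have "\<forall>j\<in>{1..n}. j \<noteq> i \<longrightarrow> ?x' j \<noteq> ?x' i" unfolding occupied_def by force
  ultimately show ?thesis using share_eq_1[OF i] by simp
qed

lemma deviation_edge_integral_ge:
  assumes Oc: "occupied n x \<subseteq> points V E lam" and served: "ends_served (occupied n x) e"
    and e: "e \<in> E" and c: "c = fst e \<or> c = snd e" and i: "i \<in> {1..n}"
    and r0: "0 \<le> \<sigma>0" "\<sigma>0 < lam e"
    and d: "0 < \<delta>" "\<delta> < reach (occupied n x) e c \<sigma>0"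
  shows "reach (occupied n x) e c \<sigma>0 - \<delta> / 2 \<le>
     (LINT t:{0<..<lam e}|lborel. share E lam n (x(i := Mid e (coord e c (\<sigma>0 + \<delta>)))) i (Mid e t))"
proof -
  let ?m = "reach (occupied n x) e c \<sigma>0"
  have fin: "finite (occupied n x)" unfolding occupied_def by simp
  define \<alpha> \<beta> where "\<alpha> = (if c = fst e then \<sigma>0 + \<delta> / 2 else lam e - \<sigma>0 - ?m)"
    and "\<beta> = (if c = fst e then \<sigma>0 + ?m else lam e - \<sigma>0 - \<delta> / 2)"
  have "\<beta> - \<alpha> \<le> (LINT t:{0<..<lam e}|lborel. share E lam n (x(i := Mid e (coord e c (\<sigma>0 + \<delta>)))) i (Mid e t))"
  proof (rule set_integral_Ioo_ge_length[OF share_measurable share_nonneg share_le_1[OF i]])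
    fix t assume "\<alpha> < t" "t < \<beta>"
    then have "\<sigma>0 + \<delta> / 2 < coord e c t" "coord e c t < \<sigma>0 + ?m"
      unfolding \<alpha>_def \<beta>_def coord_def by (auto split: if_splits)
    then show "share E lam n (x(i := Mid e (coord e c (\<sigma>0 + \<delta>)))) i (Mid e t) = 1"
      by (rule deviation_share_eq_1[OF Oc served e c i r0 d])
  next
    show "0 \<le> \<alpha>" "\<alpha> \<le> \<beta>" "\<beta> \<le> lam e"
      unfolding \<alpha>_def \<beta>_def using reach_pos_le[OF fin r0(2), of c] r0 d by auto
  qed
  then show ?thesis unfolding \<alpha>_def \<beta>_def by (cases "c = fst e") simp_all
qed

lemma reach_le_payoff:
  assumes nash: "nash_eq V E lam n x" and i: "i \<in> {1..n}"
    and e: "e \<in> E" and c: "c = fst e \<or> c = snd e" and w: "located e c (x i) \<sigma>0"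
    and served: "ends_served (occupied n x) e"
  shows "reach (occupied n x) e c \<sigma>0 \<le> payoff E lam n x i"
proof (rule ccontr)
  let ?M = "reach (occupied n x) e c \<sigma>0" and ?P = "payoff E lam n x i"
  assume "\<not> ?M \<le> ?P"
  have fin: "finite (occupied n x)" unfolding occupied_def by simp
  have r0: "0 \<le> \<sigma>0" "\<sigma>0 < lam e" using located_range[OF e w] by auto
  note M = reach_pos_le[OF fin r0(2), of c]
  have "0 \<le> ?P" unfolding payoff_def by (intro sum_nonneg set_integral_Ioo_nonneg share_nonneg)
  define \<delta> where "\<delta> = min (?M / 2) (?M - ?P)"
  have d: "0 < \<delta>" "\<delta> < ?M" "\<delta> \<le> ?M - ?P" unfolding \<delta>_def using M \<open>\<not> ?M \<le> ?P\<close> \<open>0 \<le> ?P\<close> by auto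
  let ?y = "Mid e (coord e c (\<sigma>0 + \<delta>))"
  have "?y \<in> points V E lam" using Mid_coord_in_points[OF e, of "\<sigma>0 + \<delta>" c] d r0 M by auto
  then have "payoff E lam n (x(i := ?y)) i \<le> ?P" using nash i unfolding nash_eq_def by blast
  moreover have "?M - \<delta> / 2 \<le> payoff E lam n (x(i := ?y)) i"
    using deviation_edge_integral_ge[OF nash_occupied_points[OF nash] served e c i r0 d(1,2)]
      edge_integral_le_payoff[OF e, of n "x(i := ?y)" i] by linarith
  ultimately show False using d by linarith
qed

lemma payoff_le_at_vertex:
  assumes Oc: "occupied n x \<subseteq> points V E lam" and served: "\<forall>e\<in>E. ends_served (occupied n x) e"
    and i: "i \<in> {1..n}" and v: "x i = Vtx v"
  shows "payoff E lam n x i \<le> (\<Sum>e\<in>incident v. reach (occupied n x) e v 0 / real (card {j \<in> {1..n}. x j = x i}))"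
proof (rule payoff_le_sum_edges)
  fix e assume e: "e \<in> E - incident v"
  then have "x i \<noteq> Vtx (fst e)" "x i \<noteq> Vtx (snd e)" "\<forall>t. x i \<noteq> Mid e t"
    using v unfolding incident_def by auto
  with e show "(LINT t:{0<..<lam e}|lborel. share E lam n x i (Mid e t)) \<le> 0"
    using edge_integral_off_edge[OF Oc bspec[OF served] _ i] by blast
next
  fix e assume "e \<in> incident v"
  then have "e \<in> E" "v = fst e \<or> v = snd e" unfolding incident_def by auto
  then show "(LINT t:{0<..<lam e}|lborel. share E lam n x i (Mid e t))
      \<le> reach (occupied n x) e v 0 / real (card {j \<in> {1..n}. x j = x i})"
    using edge_integral_le_reach[OF Oc bspec[OF served] _ _ i v] by blast
qed (auto simp: incident_def)

lemma located_interior: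
  assumes "(a, b) \<in> E" "0 < t0" "t0 < lam (a, b)"
  shows "located (a, b) a (Mid (a, b) t0) t0" "located (a, b) b (Mid (a, b) t0) (lam (a, b) - t0)"
  using assms edge_irrefl_asym[OF assms(1)] unfolding located_def coord_def by auto

lemma share_le_around_interior:
  assumes Oc: "occupied n x \<subseteq> points V E lam" and served: "ends_served (occupied n x) (a, b)"
    and i: "i \<in> {1..n}" and w: "x i = Mid (a, b) t0" and e: "(a, b) \<in> E" and t0: "0 < t0" "t0 < lam (a, b)"
    and t: "0 < t" "t < lam (a, b)"
  shows "share E lam n x i (Mid (a, b) t) \<le> 1 / real (card {j \<in> {1..n}. x j = x i})
      * indicator {t0 - reach (occupied n x) (a, b) b (lam (a, b) - t0) .. t0 + reach (occupied n x) (a, b) a t0} t"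
    (is "_ \<le> ?k * indicator {t0 - ?m2 .. t0 + ?m1} t")
proof (cases "t0 - ?m2 \<le> t \<and> t \<le> t0 + ?m1")
  case True
  then show ?thesis using share_le_inverse_card[OF i] by (simp add: indicator_def)
next
  case False
  have ab: "a \<noteq> b" using edge_irrefl_asym e by auto
  have m: "0 < ?m1" "0 < ?m2" using reach_pos_le(1) t0 unfolding occupied_def by auto
  note located = located_interior[OF e t0, folded w]
  from False consider "t0 + ?m1 < t" | "t < t0 - ?m2" by linarith
  then have "share E lam n x i (Mid (a, b) t) \<le> ?k * 0"
  proof cases
    case 1
    then show ?thesis using share_le_on_reach[OF Oc served e _ i located(1) t] m
      by (simp add: coord_def indicator_def)
  next
    case 2
    then show ?thesis using share_le_on_reach[OF Oc served e _ i located(2) t] m ab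
      by (simp add: coord_def indicator_def)
  qed
  moreover have "indicator {t0 - ?m2..t0 + ?m1} t = (0::real)" using False by auto
  ultimately show ?thesis by simp
qed

lemma payoff_le_at_interior:
  assumes Oc: "occupied n x \<subseteq> points V E lam" and served: "\<forall>e\<in>E. ends_served (occupied n x) e"
    and i: "i \<in> {1..n}" and w: "x i = Mid (a, b) t0" and e: "(a, b) \<in> E" and t0: "0 < t0" "t0 < lam (a, b)"
  shows "payoff E lam n x i \<le> 1 / real (card {j \<in> {1..n}. x j = x i})
           * (reach (occupied n x) (a, b) a t0 + reach (occupied n x) (a, b) b (lam (a, b) - t0))"
proof -
  let ?k = "1 / real (card {j \<in> {1..n}. x j = x i})"
  let ?m1 = "reach (occupied n x) (a, b) a t0" and ?m2 = "reach (occupied n x) (a, b) b (lam (a, b) - t0)"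
  have m: "0 < ?m1" "0 < ?m2" using reach_pos_le(1) t0 unfolding occupied_def by auto
  have "payoff E lam n x i \<le> (\<Sum>e\<in>{(a, b)}. ?k * ((t0 + ?m1) - (t0 - ?m2)))"
  proof (rule payoff_le_sum_edges)
    fix e assume e: "e \<in> E - {(a, b)}"
    then have "x i \<noteq> Vtx (fst e)" "x i \<noteq> Vtx (snd e)" "\<forall>t. x i \<noteq> Mid e t" using w by auto
    with e show "(LINT t:{0<..<lam e}|lborel. share E lam n x i (Mid e t)) \<le> 0"
      using edge_integral_off_edge[OF Oc bspec[OF served] _ i] by blast
  next
    have "(LINT t:{0<..<lam (a, b)}|lborel. share E lam n x i (Mid (a, b) t)) \<le> ?k * ((t0 + ?m1) - (t0 - ?m2))"
      using share_le_around_interior[OF Oc bspec[OF served e] i w e t0] m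
      by (intro set_integral_Ioo_le_indicator share_nonneg) auto
    then show "(LINT t:{0<..<lam e'}|lborel. share E lam n x i (Mid e' t)) \<le> ?k * ((t0 + ?m1) - (t0 - ?m2))"
      if "e' \<in> {(a, b)}" for e'
      using that by simp
  qed (use e in auto)
  then show ?thesis by simp
qed

lemma card_at_vertex_le_vdeg:
  assumes nash: "nash_eq V E lam n x" and served: "\<forall>e\<in>E. ends_served (occupied n x) e"
    and i: "i \<in> {1..n}" and v: "x i = Vtx v" "v \<in> V"
  shows "card {j \<in> {1..n}. x j = x i} \<le> vdeg E v"
proof -
  let ?O = "occupied n x" and ?K = "real (card {j \<in> {1..n}. x j = x i})"
  have K: "0 < ?K" using i by (auto simp: card_gt_0_iff)
  let ?R = "(\<lambda>e. reach ?O e v 0) ` incident v"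
  have "incident v \<noteq> {}" using vdeg_ge_1[OF v(2)] unfolding vdeg_eq_card_incident by auto
  then have "Max ?R \<in> ?R" using finite_incident by (intro Max_in) auto
  then obtain e where e: "e \<in> incident v" "reach ?O e v 0 = Max ?R" by auto
  have max: "reach ?O e' v 0 \<le> reach ?O e v 0" if "e' \<in> incident v" for e'
    using that e(2) finite_incident by simp
  let ?M = "reach ?O e v 0"
  have eE: "e \<in> E" and c: "v = fst e \<or> v = snd e" using e(1) unfolding incident_def by auto
  have M: "0 < ?M" using reach_pos_le(1) lam_pos[OF eE] unfolding occupied_def by simp
  have "?M \<le> payoff E lam n x i"
    using reach_le_payoff[OF nash i eE c _ bspec[OF served eE]] v unfolding located_def by simp
  also have "\<dots> \<le> (\<Sum>e\<in>incident v. reach ?O e v 0 / ?K)"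
    using payoff_le_at_vertex[OF nash_occupied_points[OF nash] served i v(1)] .
  also have "\<dots> \<le> (\<Sum>e\<in>incident v. ?M / ?K)"
    using max K by (intro sum_mono divide_right_mono) auto
  finally have "?M \<le> real (vdeg E v) * ?M / ?K" by (simp add: vdeg_eq_card_incident)
  then have "?K * ?M \<le> real (vdeg E v) * ?M" using K by (simp add: field_simps)
  then show ?thesis using M by simp
qed

lemma card_at_interior_le_2:
  assumes nash: "nash_eq V E lam n x" and served: "\<forall>e\<in>E. ends_served (occupied n x) e"
    and i: "i \<in> {1..n}" and w: "x i = Mid (a, b) t0" and e: "(a, b) \<in> E" and t0: "0 < t0" "t0 < lam (a, b)"
  shows "card {j \<in> {1..n}. x j = x i} \<le> 2"
proof -
  let ?O = "occupied n x" and ?K = "real (card {j \<in> {1..n}. x j = x i})"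
  let ?m1 = "reach ?O (a, b) a t0" and ?m2 = "reach ?O (a, b) b (lam (a, b) - t0)"
  have K: "0 < ?K" using i by (auto simp: card_gt_0_iff)
  have "?m1 \<le> payoff E lam n x i" "?m2 \<le> payoff E lam n x i"
    using reach_le_payoff[OF nash i e] located_interior[OF e t0, folded w] bspec[OF served e] by auto
  moreover have "payoff E lam n x i \<le> 1 / ?K * (?m1 + ?m2)"
    using payoff_le_at_interior[OF nash_occupied_points[OF nash] served i w e t0] .
  then have "?K * payoff E lam n x i \<le> ?m1 + ?m2" using K by (simp add: field_simps)
  moreover have "0 < ?m1" using reach_pos_le(1) t0 unfolding occupied_def by simp
  ultimately have "?K * payoff E lam n x i \<le> 2 * payoff E lam n x i" "0 < payoff E lam n x i" by linarith+
  then show ?thesis by simp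
qed

end

theorem mainTheorem6:
  fixes V :: "'v set" and E :: "('v \<times> 'v) set" and lam :: "'v \<times> 'v \<Rightarrow> real"
    and n :: nat and x :: "nat \<Rightarrow> 'v pt"
  assumes "network V E lam"
    and "\<forall>v\<in>V. vdeg E v \<noteq> 2"
    and "nash_eq V E lam n x"
    and "vertex_property V E n x"
    and "w \<in> points V E lam"
  shows "card {i \<in> {1..n}. x i = w} \<le> pdeg E w"
proof (cases "\<exists>i\<in>{1..n}. x i = w")
  case True
  interpret metric_graph V E lam by (rule metric_graph.intro) (rule assms(1))
  have served: "\<forall>e\<in>E. ends_served (occupied n x) e"
    using ends_served_if_vertex_property[OF assms(2,4)] by blast
  obtain i where i: "i \<in> {1..n}" "x i = w" using True by blast
  from assms(5) show ?thesis
  proof (cases rule: points_cases)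
    case (1 v)
    then show ?thesis using card_at_vertex_le_vdeg[OF assms(3) served i(1)] i by simp
  next
    case (2 a b t0)
    then show ?thesis using card_at_interior_le_2[OF assms(3) served i(1)] i by simp
  qed
next
  case False
  then have "{i \<in> {1..n}. x i = w} = {}" by blast
  then show ?thesis by (metis card.empty le0)
qed

end
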